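(* There exist absolute constants $c,C>0$ such that for every $n\in\mathbb{N}$ there exists a set $S\subseteq\mathbb{F}_2^n$ with $c\sqrt{n}\le|\Delta(S)|\le C\sqrt{n}$ and $\rho(S)=2$.
   Context: For $x,y\in\mathbb{F}_2^n$, the Hamming distance is $d_H(x,y)=\#\{i:x_i\neq y_i\}$, and for $S\subseteq\mathbb{F}_2^n$, $\Delta(S)=\{d_H(x,y):x,y\in S\}$. A set $R\subseteq\mathbb{F}_2^n$ is called rainbow if the $\binom{|R|}{2}$ Hamming distances $d_H(x,y)$ over unordered pairs of distinct points $x,y\in R$ are pairwise distinct. $\rho(S)$ denotes the maximum size of a rainbow subset $R\subseteq S$. *)

theory Defs
  imports Complex_Main
begin

text \<open>Points of F_2^n are represented as boolean lists of length n.\<close>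

definition cube :: "nat \<Rightarrow> bool list set" where
  "cube n = {x. length x = n}"

definition hamming :: "bool list \<Rightarrow> bool list \<Rightarrow> nat" where
  "hamming x y = card {i. i < length x \<and> i < length y \<and> x ! i \<noteq> y ! i}"

definition dist_set :: "bool list set \<Rightarrow> nat set" where
  "dist_set S = {hamming x y | x y. x \<in> S \<and> y \<in> S}"

definition rainbow :: "bool list set \<Rightarrow> bool" where
  "rainbow R \<longleftrightarrow> (\<forall>x\<in>R. \<forall>y\<in>R. \<forall>u\<in>R. \<forall>v\<in>R.
      x \<noteq> y \<longrightarrow> u \<noteq> v \<longrightarrow> hamming x y = hamming u v \<longrightarrow> {x, y} = {u, v})"

definition rho :: "bool list set \<Rightarrow> nat" where
  "rho S = Max {card R | R. R \<subseteq> S \<and> rainbow R}"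

end

theory Submission
  imports Defs "HOL-Library.Discrete_Functions"
begin

text \<open>
  The point \<open>x\<^sub>j\<close> is the indicator vector of \<open>[0, j) \<union> [jK, jK + j)\<close>. For \<open>i < j < K\<close> with
  \<open>K\<^sup>2 \<le> n\<close> the three intervals \<open>[i, j)\<close>, \<open>[iK, iK + i)\<close> and \<open>[jK, jK + j)\<close> making up the
  symmetric difference are disjoint, so \<open>d\<^sub>H(x\<^sub>i, x\<^sub>j) = 2 max i j\<close>. Hence \<open>x\<^sub>0, \<dots>, x\<^sub>K\<^sub>-\<^sub>1\<close>
  realise exactly the \<open>K\<close> distances \<open>0, 2, \<dots>, 2(K - 1)\<close>, and in every triple the two pairs
  through the largest index have the same distance, so no three points form a rainbow set.
  Taking \<open>K = \<lfloor>\<surd>n\<rfloor>\<close> gives \<open>|\<Delta>(S)| \<asymp> \<surd>n\<close>; for \<open>n < 4\<close> any two distinct points will do.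
\<close>

lemma hamming_self [simp]: "hamming x x = 0"
  unfolding hamming_def by simp

lemma hamming_sym: "hamming x y = hamming y x"
  unfolding hamming_def by metis

lemma hamming_eq_0_iff:
  assumes "length x = length y"
  shows "hamming x y = 0 \<longleftrightarrow> x = y"
proof
  assume "hamming x y = 0"
  then have "{i. i < length x \<and> i < length y \<and> x ! i \<noteq> y ! i} = {}"
    unfolding hamming_def by simp
  then show "x = y"
    using assms by (simp add: list_eq_iff_nth_eq)
qed simp

lemma hamming_map_upt:
  "hamming (map f [0..<n]) (map g [0..<n]) = card {p. p < n \<and> f p \<noteq> g p}"
  unfolding hamming_def by (auto intro!: arg_cong[where f = card])

definition isosceles :: "bool list set \<Rightarrow> bool" where
  "isosceles S \<longleftrightarrow> (\<forall>x\<in>S. \<forall>y\<in>S. \<forall>z\<in>S. x \<noteq> y \<and> x \<noteq> z \<and> y \<noteq> z \<longrightarrow>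
     hamming x z = hamming y z \<or> hamming x y = hamming z y \<or> hamming y x = hamming z x)"

lemma isosceles_doubleton: "isosceles {x, y}"
  unfolding isosceles_def by auto

lemma isosceles_image_if_hamming_max:
  fixes f :: "'a :: linorder \<Rightarrow> bool list"
  assumes "\<And>i j. i \<in> I \<Longrightarrow> j \<in> I \<Longrightarrow> i \<noteq> j \<Longrightarrow> hamming (f i) (f j) = g (max i j)"
  shows "isosceles (f ` I)"
  unfolding isosceles_def
proof (intro ballI impI)
  fix x y z
  assume "x \<in> f ` I" "y \<in> f ` I" "z \<in> f ` I" and distinct: "x \<noteq> y \<and> x \<noteq> z \<and> y \<noteq> z"
  then obtain i j l where "i \<in> I" "j \<in> I" "l \<in> I" "x = f i" "y = f j" "z = f l"
    by blast
  moreover have "i \<noteq> j" "i \<noteq> l" "j \<noteq> l"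
    using distinct calculation by auto
  ultimately show "hamming x z = hamming y z \<or> hamming x y = hamming z y \<or> hamming y x = hamming z x"
    using assms by (auto simp: max_def)
qed

lemma card_le_2_if_rainbow_isosceles:
  assumes "rainbow R" "isosceles S" "R \<subseteq> S"
  shows "card R \<le> 2"
proof (rule ccontr)
  assume "\<not> card R \<le> 2"
  then have "3 \<le> card R" by simp
  then obtain T where "T \<subseteq> R" "card T = 3"
    by (rule obtain_subset_with_card_n)
  then obtain x y z where xyz: "x \<in> R" "y \<in> R" "z \<in> R" "x \<noteq> y" "x \<noteq> z" "y \<noteq> z"
    by (auto simp: card_3_iff)
  have distinct_pairs_differ: "hamming a b \<noteq> hamming c d"
    if "a \<in> R" "b \<in> R" "c \<in> R" "d \<in> R" "a \<noteq> b" "c \<noteq> d" "{a, b} \<noteq> {c, d}" for a b c d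
    using assms(1) that unfolding rainbow_def by blast
  have "{x, z} \<noteq> {y, z}" "{x, y} \<noteq> {z, y}" "{y, x} \<noteq> {z, x}"
    using xyz by (auto simp: doubleton_eq_iff)
  then have "hamming x z \<noteq> hamming y z" "hamming x y \<noteq> hamming z y" "hamming y x \<noteq> hamming z x"
    using xyz distinct_pairs_differ by blast+
  then show False
    using assms(2,3) xyz unfolding isosceles_def by blast
qed

lemma rainbow_doubleton: "rainbow {x, y}"
  unfolding rainbow_def by (auto simp: doubleton_eq_iff)

lemma rho_eq_2_if_isosceles:
  assumes "finite S" "isosceles S" "x \<in> S" "y \<in> S" "x \<noteq> y"
  shows "rho S = 2"
  unfolding rho_def
proof (rule Max_eqI)
  have "{card R |R. R \<subseteq> S \<and> rainbow R} \<subseteq> card ` Pow S"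
    by blast
  then show "finite {card R |R. R \<subseteq> S \<and> rainbow R}"
    by (rule finite_subset) (use assms(1) in simp)
  show "m \<le> 2" if "m \<in> {card R |R. R \<subseteq> S \<and> rainbow R}" for m
  proof -
    from that obtain R where "m = card R" "R \<subseteq> S" "rainbow R"
      by blast
    then show ?thesis
      using card_le_2_if_rainbow_isosceles[OF _ assms(2)] by simp
  qed
  have "{x, y} \<subseteq> S \<and> rainbow {x, y}"
    using assms(3,4) rainbow_doubleton by blast
  then have "card {x, y} \<in> {card R |R. R \<subseteq> S \<and> rainbow R}"
    by blast
  moreover have "card {x, y} = 2"
    using assms(5) by simp
  ultimately show "2 \<in> {card R |R. R \<subseteq> S \<and> rainbow R}"
    by metis
qed

lemma rho_doubleton: "x \<noteq> y \<Longrightarrow> rho {x, y} = 2"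
  by (rule rho_eq_2_if_isosceles[where x = x and y = y]) (simp_all add: isosceles_doubleton)

lemma card_dist_set_doubleton:
  assumes "length x = length y" "x \<noteq> y"
  shows "card (dist_set {x, y}) = 2"
proof -
  have "dist_set {x, y} = {0, hamming x y}"
    unfolding dist_set_def using hamming_sym[of y x] by force
  moreover have "hamming x y \<noteq> 0"
    using assms hamming_eq_0_iff by blast
  ultimately show ?thesis
    by simp
qed

definition stair_point :: "nat \<Rightarrow> nat \<Rightarrow> nat \<Rightarrow> bool list" where
  "stair_point n K j = map (\<lambda>p. p < j \<or> (j * K \<le> p \<and> p < j * K + j)) [0..<n]"

lemma stair_point_in_cube: "stair_point n K j \<in> cube n"
  unfolding stair_point_def cube_def by simp

lemma hamming_stair_point_less:
  assumes "i < j" "j < K" "K * K \<le> n"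
  shows "hamming (stair_point n K i) (stair_point n K j) = 2 * j"
proof -
  define a b where "a = i * K" and "b = j * K"
  have "i * K + i < (i + 1) * K" "(i + 1) * K \<le> j * K" "(j + 1) * K \<le> K * K"
    using assms by (simp, (intro mult_le_mono1, simp)+)
  then have blocks: "i = 0 \<or> j \<le> a" "j \<le> b" "a + i \<le> b" "b + j \<le> n"
    using assms unfolding a_def b_def
    by (auto simp: algebra_simps intro: le_trans[of j K] split: nat_diff_split)
  have "{p. p < n \<and> (p < i \<or> (a \<le> p \<and> p < a + i)) \<noteq> (p < j \<or> (b \<le> p \<and> p < b + j))}
      = ({i..<j} \<union> {a..<a + i}) \<union> {b..<b + j}"
    using assms(1) blocks by auto
  moreover have "card (({i..<j} \<union> {a..<a + i}) \<union> {b..<b + j}) = (j - i) + i + j"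
    using blocks by (subst card_Un_disjoint; auto simp: card_Un_disjoint)+
  ultimately show ?thesis
    using assms(1)
    unfolding stair_point_def hamming_map_upt a_def[symmetric] b_def[symmetric] by simp
qed

lemma hamming_stair_point:
  assumes "i \<noteq> j" "i < K" "j < K" "K * K \<le> n"
  shows "hamming (stair_point n K i) (stair_point n K j) = 2 * max i j"
  using assms hamming_stair_point_less[of i j K n] hamming_stair_point_less[of j i K n] hamming_sym
  by (cases "i < j") (auto simp: max_def)

lemma dist_set_stair_points:
  assumes "K * K \<le> n"
  shows "dist_set (stair_point n K ` {..<K}) = (\<lambda>j. 2 * j) ` {..<K}"
proof (intro equalityI subsetI)
  fix d
  assume "d \<in> dist_set (stair_point n K ` {..<K})"
  then obtain i j where "i < K" "j < K" "d = hamming (stair_point n K i) (stair_point n K j)"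
    unfolding dist_set_def by blast
  then show "d \<in> (\<lambda>j. 2 * j) ` {..<K}"
    using assms hamming_stair_point[of i j K n] by (cases "i = j") auto
next
  fix d
  assume "d \<in> (\<lambda>j. 2 * j) ` {..<K}"
  then obtain j where j: "j < K" "d = 2 * j"
    by blast
  have "hamming (stair_point n K 0) (stair_point n K j) = d"
  proof (cases "j = 0")
    case False
    then show ?thesis
      using assms j hamming_stair_point[of 0 j K n] by simp
  qed (use j in simp)
  moreover have "stair_point n K 0 \<in> stair_point n K ` {..<K}" "stair_point n K j \<in> stair_point n K ` {..<K}"
    using j by auto
  ultimately show "d \<in> dist_set (stair_point n K ` {..<K})"
    unfolding dist_set_def by blast
qed

lemma card_dist_set_stair_points:
  "K * K \<le> n \<Longrightarrow> card (dist_set (stair_point n K ` {..<K})) = K"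
  by (simp add: dist_set_stair_points card_image inj_on_def)

lemma rho_stair_points:
  assumes "2 \<le> K" "K * K \<le> n"
  shows "rho (stair_point n K ` {..<K}) = 2"
proof (rule rho_eq_2_if_isosceles)
  show "isosceles (stair_point n K ` {..<K})"
    using assms(2) hamming_stair_point by (intro isosceles_image_if_hamming_max) auto
  have "hamming (stair_point n K 0) (stair_point n K 1) = 2"
    using assms hamming_stair_point[of 0 1 K n] by simp
  then show "stair_point n K 0 \<noteq> stair_point n K 1"
    by auto
qed (use assms in auto)

lemma floor_sqrt_le_sqrt: "real (floor_sqrt n) \<le> sqrt (real n)"
  by (rule real_le_rsqrt) (metis floor_sqrt_power2_le of_nat_le_iff of_nat_power)

lemma sqrt_less_floor_sqrt_plus_1: "sqrt (real n) < real (floor_sqrt n) + 1"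
proof (rule real_less_lsqrt)
  have "real n < real ((Suc (floor_sqrt n))\<^sup>2)"
    using Suc_floor_sqrt_power2_gt of_nat_less_iff by blast
  then show "real n < (real (floor_sqrt n) + 1)\<^sup>2"
    by (simp add: add.commute)
qed simp

lemma exists_two_point_set:
  assumes "n \<ge> 1"
  shows "\<exists>S \<subseteq> cube n. card (dist_set S) = 2 \<and> rho S = 2"
proof -
  let ?x = "replicate n False" and ?y = "replicate n True"
  have "?x \<noteq> ?y"
    using assms by (cases n) auto
  then have "card (dist_set {?x, ?y}) = 2" "rho {?x, ?y} = 2"
    by (simp_all add: card_dist_set_doubleton rho_doubleton)
  moreover have "{?x, ?y} \<subseteq> cube n"
    by (simp add: cube_def)
  ultimately show ?thesis
    by blast
qed

lemma exists_stair_set: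
  assumes "n \<ge> 4"
  shows "\<exists>S \<subseteq> cube n. card (dist_set S) = floor_sqrt n \<and> rho S = 2"
proof -
  define K where "K = floor_sqrt n"
  have "2 \<le> K"
    unfolding K_def using assms by (intro le_floor_sqrtI) simp
  moreover have "K * K \<le> n"
    using floor_sqrt_power2_le[of n] unfolding K_def power2_eq_square .
  ultimately have "card (dist_set (stair_point n K ` {..<K})) = K" "rho (stair_point n K ` {..<K}) = 2"
    by (simp_all add: card_dist_set_stair_points rho_stair_points)
  moreover have "stair_point n K ` {..<K} \<subseteq> cube n"
    using stair_point_in_cube by blast
  ultimately show ?thesis
    unfolding K_def by blast
qed

theorem theorem1p4:
  shows "\<exists>c C :: real. c > 0 \<and> C > 0 \<and>
    (\<forall>n::nat. n \<ge> 1 \<longrightarrow> (\<exists>S. S \<subseteq> cube n \<and>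
       c * sqrt (real n) \<le> real (card (dist_set S)) \<and>
       real (card (dist_set S)) \<le> C * sqrt (real n) \<and>
       rho S = 2))"
proof (rule exI[of _ "1/2"], rule exI[of _ 2], intro conjI allI impI)
  fix n :: nat
  assume "n \<ge> 1"
  then have sqrt_ge_1: "sqrt (real n) \<ge> 1"
    by simp
  show "\<exists>S. S \<subseteq> cube n \<and> 1/2 * sqrt (real n) \<le> real (card (dist_set S)) \<and>
       real (card (dist_set S)) \<le> 2 * sqrt (real n) \<and> rho S = 2"
  proof (cases "n < 4")
    case True
    then have "sqrt (real n) < 2"
      by (intro real_less_lsqrt) auto
    then show ?thesis
      using exists_two_point_set[OF \<open>n \<ge> 1\<close>] sqrt_ge_1 by auto
  next
    case False
    then have "2 \<le> floor_sqrt n"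
      by (intro le_floor_sqrtI) simp
    then show ?thesis
      using exists_stair_set[of n] False floor_sqrt_le_sqrt[of n] sqrt_less_floor_sqrt_plus_1[of n]
        sqrt_ge_1 by auto
  qed
qed simp_all

end
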